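(* Let $X_1,X_2,\dots$ be i.i.d. real-valued random variables with common distribution $F$, let $f_c:\mathbb{R}^2\to\mathbb{R}$ be Borel measurable with $f_c(x,y)=f_c(y,x)$, let $B\subset\mathbb{R}$ be a Borel set, and fix a real number $w$. Set $h_D(x,y)=I_B(f_c(x,y))$, $h_T(x,y,z)=I_B(f_c(x,y))I_B(f_c(y,z))I_B(f_c(z,x))$, $h_V(x,y,z)=I_B(f_c(x,y))I_B(f_c(x,z))$. For $x\in\mathbb{R}$ and $n\ge 1$ define $$T_n(1;x)=\sum_{2\le j<k\le n}h_T(x,X_j,X_k),\qquad V_n(1;x)=\sum_{2\le j<k\le n}h_V(x,X_j,X_k),$$ $$C_n(1;x)=\frac{T_n(1;x)}{V_n(1;x)}I_{\{V_n(1;x)\ge 1\}}+w\, I_{\{V_n(1;x)=0\}},$$ and let $C_n(1)=C_n(1;X_1)$ (this is the local clustering coefficient of vertex $1$ in the random graph on vertices $1,\dots,n$ where $i\ne j$ are adjacent iff $f_c(X_i,X_j)\in B$, with value $w$ when vertex $1$ has degree $0$ or $1$). Further define $E_D(x)=\int_{\mathbb{R}}h_D(x,y)F(dy)$, $E_T(x)=\int_{\mathbb{R}}\int_{\mathbb{R}}h_T(x,y,z)F(dy)F(dz)$, $$C(1;x)=\frac{E_T(x)}{E_D(x)^2}I_{\{E_D(x)>0\}}+w\,I_{\{E_D(x)=0\}},$$ and $C(1)=C(1;X_1)$. Then as $n\to\infty$: (i) for every $x\in\mathbb{R}$, $C_n(1;x)\to C(1;x)$ almost surely; (ii) $C_n(1)\to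 C(1)$ almost surely.
   Context: $I_A$ denotes the indicator function of the set $A$. *)

theory Defs
  imports "HOL-Probability.Probability"
begin

definition hD :: "(real \<Rightarrow> real \<Rightarrow> real) \<Rightarrow> real set \<Rightarrow> real \<Rightarrow> real \<Rightarrow> real" where
  "hD fc B x y = indicator B (fc x y)"

definition hT :: "(real \<Rightarrow> real \<Rightarrow> real) \<Rightarrow> real set \<Rightarrow> real \<Rightarrow> real \<Rightarrow> real \<Rightarrow> real" where
  "hT fc B x y z = indicator B (fc x y) * indicator B (fc y z) * indicator B (fc z x)"

definition hV :: "(real \<Rightarrow> real \<Rightarrow> real) \<Rightarrow> real set \<Rightarrow> real \<Rightarrow> real \<Rightarrow> real \<Rightarrow> real" where
  "hV fc B x y z = indicator B (fc x y) * indicator B (fc x z)"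

definition Tn :: "(real \<Rightarrow> real \<Rightarrow> real) \<Rightarrow> real set \<Rightarrow> (nat \<Rightarrow> 'a \<Rightarrow> real) \<Rightarrow> nat \<Rightarrow> real \<Rightarrow> 'a \<Rightarrow> real" where
  "Tn fc B X n x \<omega> = (\<Sum>j\<in>{2..n}. \<Sum>k\<in>{j<..n}. hT fc B x (X j \<omega>) (X k \<omega>))"

definition Vn :: "(real \<Rightarrow> real \<Rightarrow> real) \<Rightarrow> real set \<Rightarrow> (nat \<Rightarrow> 'a \<Rightarrow> real) \<Rightarrow> nat \<Rightarrow> real \<Rightarrow> 'a \<Rightarrow> real" where
  "Vn fc B X n x \<omega> = (\<Sum>j\<in>{2..n}. \<Sum>k\<in>{j<..n}. hV fc B x (X j \<omega>) (X k \<omega>))"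

definition Cn :: "(real \<Rightarrow> real \<Rightarrow> real) \<Rightarrow> real set \<Rightarrow> real \<Rightarrow> (nat \<Rightarrow> 'a \<Rightarrow> real) \<Rightarrow> nat \<Rightarrow> real \<Rightarrow> 'a \<Rightarrow> real" where
  "Cn fc B w X n x \<omega> =
     Tn fc B X n x \<omega> / Vn fc B X n x \<omega> * indicator {1..} (Vn fc B X n x \<omega>)
     + w * indicator {0} (Vn fc B X n x \<omega>)"

definition ED :: "(real \<Rightarrow> real \<Rightarrow> real) \<Rightarrow> real set \<Rightarrow> real measure \<Rightarrow> real \<Rightarrow> real" where
  "ED fc B F x = (\<integral>y. hD fc B x y \<partial>F)"

definition ET :: "(real \<Rightarrow> real \<Rightarrow> real) \<Rightarrow> real set \<Rightarrow> real measure \<Rightarrow> real \<Rightarrow> real" where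
  "ET fc B F x = (\<integral>z. (\<integral>y. hT fc B x y z \<partial>F) \<partial>F)"

definition Clim :: "(real \<Rightarrow> real \<Rightarrow> real) \<Rightarrow> real set \<Rightarrow> real \<Rightarrow> real measure \<Rightarrow> real \<Rightarrow> real" where
  "Clim fc B w F x =
     ET fc B F x / (ED fc B F x)\<^sup>2 * indicator {0<..} (ED fc B F x)
     + w * indicator {0} (ED fc B F x)"

end

(*
  Write x for the first argument and treat X_2, X_3, ... as the sample. Then T_n(1;x) and
  V_n(1;x) are U-statistics of order two over the N_n = (n-1)(n-2)/2 index pairs, with kernels
  taking values in [0,1] and means E_T(x) and E_D(x)^2. After centring the kernel, summands
  over disjoint pairs are uncorrelated, so the centred sum has second moment at most
  N_n * 4(n+1); normalised by N_n this is O(1/n), summable along n = k^2. Hence the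
  normalised sums converge almost surely along squares, and since the sums are monotone in n
  and N_{(k+1)^2}/N_{k^2} -> 1 they converge along the whole sequence. If E_D(x) > 0 the ratio
  C_n(1;x) converges to E_T(x)/E_D(x)^2; if E_D(x) = 0 vertex 1 almost surely has no
  neighbour at all, so C_n(1;x) = w. Letting x be a measurable function of X_1 covers the
  fixed point x and the random point X_1 in one argument.
*)
theory Submission
  imports Defs "HOL-Library.Discrete_Functions" "HOL-Real_Asymp.Real_Asymp"
begin

lemma LIMSEQ_ratio_of_mono_along_squares:
  fixes a N :: "nat \<Rightarrow> real"
  assumes a_mono: "mono a" and a_nonneg: "\<And>n. 0 \<le> a n"
    and N_mono: "mono N" and N_pos: "eventually (\<lambda>n. 0 < N n) sequentially"
    and N_ratio: "(\<lambda>k. N ((Suc k)\<^sup>2) / N (k\<^sup>2)) \<longlonglongrightarrow> 1"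
    and lim: "(\<lambda>k. a (k\<^sup>2) / N (k\<^sup>2)) \<longlonglongrightarrow> L"
  shows "(\<lambda>n. a n / N n) \<longlonglongrightarrow> L"
proof -
  define r where "r n = floor_sqrt n" for n
  define u where "u k = a (k\<^sup>2) / N (k\<^sup>2)" for k
  define \<rho> where "\<rho> k = N ((Suc k)\<^sup>2) / N (k\<^sup>2)" for k
  have r: "filterlim r at_top at_top"
    unfolding filterlim_at_top
  proof
    fix Z
    show "eventually (\<lambda>n. Z \<le> r n) at_top"
      using eventually_ge_at_top[of "Z\<^sup>2"] by eventually_elim (simp add: r_def le_floor_sqrtI)
  qed
  obtain n0 where n0: "\<And>n. n \<ge> n0 \<Longrightarrow> 0 < N n"
    using N_pos by (auto simp: eventually_at_top_linorder)
  have lo: "(\<lambda>n. u (r n) / \<rho> (r n)) \<longlonglongrightarrow> L"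
    using filterlim_compose[OF tendsto_divide[OF lim N_ratio] r] by (simp add: u_def \<rho>_def o_def)
  have hi: "(\<lambda>n. u (Suc (r n)) * \<rho> (r n)) \<longlonglongrightarrow> L"
    using filterlim_compose[OF tendsto_mult[OF LIMSEQ_Suc[OF lim] N_ratio] r]
    by (simp add: u_def \<rho>_def o_def)
  have "eventually (\<lambda>n. u (r n) / \<rho> (r n) \<le> a n / N n \<and> a n / N n \<le> u (Suc (r n)) * \<rho> (r n))
      sequentially"
    using eventually_ge_at_top[of "n0\<^sup>2"]
  proof eventually_elim
    case (elim n)
    have below: "(r n)\<^sup>2 \<le> n" and above: "n \<le> (Suc (r n))\<^sup>2"
      using Suc_floor_sqrt_power2_gt[of n] by (simp_all add: r_def)
    have "n0 \<le> r n" using elim by (simp add: r_def le_floor_sqrtI)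
    then have "n0 \<le> (r n)\<^sup>2" by (simp add: power2_eq_square order_trans[OF _ le_square])
    then have pos: "0 < N ((r n)\<^sup>2)" "0 < N n" "0 < N ((Suc (r n))\<^sup>2)"
      using below above by (auto intro: n0)
    have a_le: "a ((r n)\<^sup>2) \<le> a n" "a n \<le> a ((Suc (r n))\<^sup>2)"
      using below above by (auto intro: monoD[OF a_mono])
    have N_le: "N ((r n)\<^sup>2) \<le> N n" "N n \<le> N ((Suc (r n))\<^sup>2)"
      using below above by (auto intro: monoD[OF N_mono])
    have "u (r n) / \<rho> (r n) = a ((r n)\<^sup>2) / N ((Suc (r n))\<^sup>2)"
      using pos by (simp add: u_def \<rho>_def)
    also have "\<dots> \<le> a n / N ((Suc (r n))\<^sup>2)"
      using a_le pos by (simp add: divide_right_mono)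
    also have "\<dots> \<le> a n / N n"
      using pos N_le a_nonneg[of n] by (intro divide_left_mono) auto
    finally have lower: "u (r n) / \<rho> (r n) \<le> a n / N n" .
    have "a n / N n \<le> a n / N ((r n)\<^sup>2)"
      using pos N_le a_nonneg[of n] by (intro divide_left_mono) auto
    also have "\<dots> \<le> a ((Suc (r n))\<^sup>2) / N ((r n)\<^sup>2)"
      using a_le pos by (simp add: divide_right_mono)
    also have "\<dots> = u (Suc (r n)) * \<rho> (r n)"
      using pos by (simp add: u_def \<rho>_def)
    finally show ?case using lower by simp
  qed
  then show ?thesis
    by (intro tendsto_sandwich[OF _ _ lo hi]) (auto elim: eventually_mono)
qed

definition index_pairs :: "nat \<Rightarrow> (nat \<times> nat) set" where
  "index_pairs n = Sigma {2..n} (\<lambda>j. {j<..n})"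

lemma finite_index_pairs [simp]: "finite (index_pairs n)"
  by (simp add: index_pairs_def)

lemma mem_index_pairs: "p \<in> index_pairs n \<longleftrightarrow> 2 \<le> fst p \<and> fst p < snd p \<and> snd p \<le> n"
  by (cases p) (auto simp: index_pairs_def)

lemma sum_index_pairs:
  "(\<Sum>j\<in>{2..n}. \<Sum>k\<in>{j<..n}. f j k) = (\<Sum>p\<in>index_pairs n. f (fst p) (snd p))"
  unfolding index_pairs_def by (subst sum.Sigma) (auto simp: case_prod_beta)

lemma mono_index_pairs: "mono index_pairs"
  by (auto intro!: monoI simp: mem_index_pairs)

lemma card_index_pairs_pos: "3 \<le> n \<Longrightarrow> 0 < card (index_pairs n)"
  using card_gt_0_iff[of "index_pairs n"] mem_index_pairs[of "(2, 3)" n] by auto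

lemma eventually_card_index_pairs_pos: "eventually (\<lambda>n. 0 < real (card (index_pairs n))) sequentially"
  using eventually_ge_at_top[of 3] by eventually_elim (simp add: card_index_pairs_pos)

lemma card_index_pairs: "1 \<le> n \<Longrightarrow> real (card (index_pairs n)) = (real n - 1) * (real n - 2) / 2"
proof (induction n rule: dec_induct)
  case base
  then show ?case by (simp add: index_pairs_def)
next
  case (step n)
  have "index_pairs (Suc n) = index_pairs n \<union> {2..n} \<times> {Suc n}"
    by (auto simp: mem_index_pairs)
  moreover have "index_pairs n \<inter> {2..n} \<times> {Suc n} = {}"
    by (auto simp: mem_index_pairs)
  ultimately have "card (index_pairs (Suc n)) = card (index_pairs n) + (n - 1)"
    by (simp add: card_Un_disjoint card_cartesian_product)
  then show ?case
    using step by (simp add: of_nat_diff field_simps)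
qed

lemma card_index_pairs_squares_ratio:
  "(\<lambda>k. real (card (index_pairs ((Suc k)\<^sup>2))) / real (card (index_pairs (k\<^sup>2)))) \<longlonglongrightarrow> 1"
proof -
  have "eventually (\<lambda>k. real (card (index_pairs ((Suc k)\<^sup>2))) / real (card (index_pairs (k\<^sup>2)))
      = ((real (Suc k))\<^sup>2 - 1) * ((real (Suc k))\<^sup>2 - 2) / (((real k)\<^sup>2 - 1) * ((real k)\<^sup>2 - 2)))
    sequentially"
    using eventually_ge_at_top[of 1]
    by eventually_elim (simp add: card_index_pairs)
  moreover have "(\<lambda>k. ((real (Suc k))\<^sup>2 - 1) * ((real (Suc k))\<^sup>2 - 2) / (((real k)\<^sup>2 - 1) * ((real k)\<^sup>2 - 2)))
      \<longlonglongrightarrow> 1"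
    by real_asymp
  ultimately show ?thesis
    by (simp add: tendsto_cong)
qed

lemma card_index_pairs_meeting:
  "card {q \<in> index_pairs n. fst q \<in> {i, j} \<or> snd q \<in> {i, j}} \<le> 4 * (n + 1)"
proof -
  have "{q \<in> index_pairs n. fst q \<in> {i, j} \<or> snd q \<in> {i, j}}
      \<subseteq> {i, j} \<times> {..n} \<union> {..n} \<times> {i, j}"
    by (auto simp: mem_index_pairs)
  then have "card {q \<in> index_pairs n. fst q \<in> {i, j} \<or> snd q \<in> {i, j}}
      \<le> card ({i, j} \<times> {..n}) + card ({..n} \<times> {i, j})"
    by (meson card_Un_le card_mono finite_SigmaI finite_UnI finite_atMost finite.intros order_trans)
  also have "\<dots> = 2 * (card {i, j} * (n + 1))"
    by (simp add: card_cartesian_product)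
  also have "\<dots> \<le> 2 * (2 * (n + 1))"
    using card_insert_le_m1[of 2 "{j}" i] by (intro mult_le_mono2 mult_le_mono1) simp
  also have "\<dots> = 4 * (n + 1)"
    by simp
  finally show ?thesis .
qed

lemma summable_linear_over_card_index_pairs_squares:
  "summable (\<lambda>k. 4 * (real (k\<^sup>2) + 1) / real (card (index_pairs (k\<^sup>2))))"
proof (rule summable_comparison_test_bigo)
  show "summable (\<lambda>k. norm (inverse (real k ^ 2)))"
    using inverse_power_summable[of 2, where 'a=real] by simp
  have "eventually (\<lambda>k. 4 * (real (k\<^sup>2) + 1) / real (card (index_pairs (k\<^sup>2)))
      = 8 * ((real k)\<^sup>2 + 1) / (((real k)\<^sup>2 - 1) * ((real k)\<^sup>2 - 2))) sequentially"
    using eventually_ge_at_top[of 1] by eventually_elim (simp add: card_index_pairs)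
  moreover have "(\<lambda>k. 8 * ((real k)\<^sup>2 + 1) / (((real k)\<^sup>2 - 1) * ((real k)\<^sup>2 - 2)))
      \<in> O(\<lambda>k. inverse (real k ^ 2))"
    by real_asymp
  ultimately show "(\<lambda>k. 4 * (real (k\<^sup>2) + 1) / real (card (index_pairs (k\<^sup>2))))
      \<in> O(\<lambda>k. inverse (real k ^ 2))"
    by (subst landau_o.big.in_cong) auto
qed

lemma (in prob_space) AE_LIMSEQ_zero_of_summable_second_moments:
  fixes f :: "nat \<Rightarrow> 'a \<Rightarrow> real"
  assumes f_meas: "\<And>k. f k \<in> borel_measurable M"
    and f_int: "\<And>k. integrable M (\<lambda>\<omega>. (f k \<omega>)\<^sup>2)"
    and summ: "summable (\<lambda>k. \<integral>\<omega>. (f k \<omega>)\<^sup>2 \<partial>M)"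
  shows "AE \<omega> in M. (\<lambda>k. f k \<omega>) \<longlonglongrightarrow> 0"
proof -
  have "(\<integral>\<^sup>+\<omega>. (\<Sum>k. ennreal ((f k \<omega>)\<^sup>2)) \<partial>M) = (\<Sum>k. \<integral>\<^sup>+\<omega>. ennreal ((f k \<omega>)\<^sup>2) \<partial>M)"
    using f_meas by (intro nn_integral_suminf) simp
  also have "\<dots> = (\<Sum>k. ennreal (\<integral>\<omega>. (f k \<omega>)\<^sup>2 \<partial>M))"
    using f_int by (intro suminf_cong nn_integral_eq_integral) auto
  also have "\<dots> \<noteq> top"
    by (rule ennreal_suminf_neq_top[OF summ]) simp
  finally have "AE \<omega> in M. (\<Sum>k. ennreal ((f k \<omega>)\<^sup>2)) \<noteq> \<infinity>"
    using f_meas by (intro nn_integral_PInf_AE) auto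
  then show ?thesis
  proof eventually_elim
    case (elim \<omega>)
    then have "summable (\<lambda>k. (f k \<omega>)\<^sup>2)"
      by (intro summable_suminf_not_top) auto
    then have "(\<lambda>k. sqrt ((f k \<omega>)\<^sup>2)) \<longlonglongrightarrow> sqrt 0"
      by (intro tendsto_real_sqrt summable_LIMSEQ_zero)
    then show ?case
      by (simp add: tendsto_rabs_zero_iff)
  qed
qed

lemma (in prob_space) second_moment_sum_le:
  fixes a :: "'i \<Rightarrow> 'a \<Rightarrow> real"
  assumes "finite I"
    and a_meas: "\<And>i. i \<in> I \<Longrightarrow> a i \<in> borel_measurable M"
    and a_bound: "\<And>i \<omega>. i \<in> I \<Longrightarrow> \<bar>a i \<omega>\<bar> \<le> 1"
    and orthogonal: "\<And>i j. i \<in> I \<Longrightarrow> j \<in> I \<Longrightarrow> j \<notin> R i \<Longrightarrow> (\<integral>\<omega>. a i \<omega> * a j \<omega> \<partial>M) = 0"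
    and few_related: "\<And>i. i \<in> I \<Longrightarrow> card {j \<in> I. j \<in> R i} \<le> m"
  shows "(\<integral>\<omega>. (\<Sum>i\<in>I. a i \<omega>)\<^sup>2 \<partial>M) \<le> real (card I) * real m"
proof -
  have prod_bound: "\<bar>a i \<omega> * a j \<omega>\<bar> \<le> 1" if "i \<in> I" "j \<in> I" for i j \<omega>
    using a_bound[OF that(1)] a_bound[OF that(2)] by (auto simp: abs_mult intro: mult_le_one)
  have prod_int: "integrable M (\<lambda>\<omega>. a i \<omega> * a j \<omega>)" if "i \<in> I" "j \<in> I" for i j
    using prod_bound[OF that] a_meas that by (intro integrable_const_bound[where B=1]) auto
  have row: "(\<Sum>j\<in>I. \<integral>\<omega>. a i \<omega> * a j \<omega> \<partial>M) \<le> real m" if i: "i \<in> I" for i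
  proof -
    have "(\<Sum>j\<in>I. \<integral>\<omega>. a i \<omega> * a j \<omega> \<partial>M) \<le> (\<Sum>j\<in>I. if j \<in> R i then 1 else 0)"
    proof (intro sum_mono)
      fix j assume j: "j \<in> I"
      have "(\<integral>\<omega>. a i \<omega> * a j \<omega> \<partial>M) \<le> 1"
        using prod_bound[OF i j] by (intro integral_le_const prod_int i j) (auto simp: abs_le_iff)
      then show "(\<integral>\<omega>. a i \<omega> * a j \<omega> \<partial>M) \<le> (if j \<in> R i then 1 else 0)"
        using orthogonal[OF i j] by auto
    qed
    also have "\<dots> = real (card {j \<in> I. j \<in> R i})"
      using \<open>finite I\<close> by (simp add: sum.If_cases Int_def)
    also have "\<dots> \<le> real m"
      using few_related[OF i] by simp
    finally show ?thesis .
  qed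
  have "(\<integral>\<omega>. (\<Sum>i\<in>I. a i \<omega>)\<^sup>2 \<partial>M) = (\<Sum>i\<in>I. \<Sum>j\<in>I. \<integral>\<omega>. a i \<omega> * a j \<omega> \<partial>M)"
    using prod_int by (simp add: power2_eq_square sum_product integrable_sum)
  also have "\<dots> \<le> (\<Sum>i\<in>I. real m)"
    by (intro sum_mono row)
  finally show ?thesis
    by simp
qed

lemma (in prob_space) integral_indep_var:
  fixes \<phi> :: "'b \<times> 'b \<Rightarrow> real"
  assumes indep: "indep_var S U T V"
    and \<phi>_meas: "\<phi> \<in> borel_measurable (S \<Otimes>\<^sub>M T)" and \<phi>_bound: "\<And>z. \<bar>\<phi> z\<bar> \<le> c"
  shows "(\<integral>\<omega>. \<phi> (U \<omega>, V \<omega>) \<partial>M) = (\<integral>u. (\<integral>v. \<phi> (u, v) \<partial>distr M T V) \<partial>distr M S U)"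
proof -
  have U_meas: "U \<in> measurable M S" and V_meas: "V \<in> measurable M T"
    using indep by (auto dest: indep_var_rv1 indep_var_rv2)
  interpret UV: pair_prob_space "distr M S U" "distr M T V"
    using U_meas V_meas
    by (simp add: pair_prob_space_def pair_sigma_finite_def prob_space_imp_sigma_finite prob_space_distr)
  have joint: "distr M (S \<Otimes>\<^sub>M T) (\<lambda>\<omega>. (U \<omega>, V \<omega>)) = distr M S U \<Otimes>\<^sub>M distr M T V"
    using indep by (simp add: indep_var_distribution_eq)
  have "integrable (distr M S U \<Otimes>\<^sub>M distr M T V) \<phi>"
    using \<phi>_meas \<phi>_bound by (intro UV.P.integrable_const_bound[where B=c]) auto
  then have "(\<integral>z. \<phi> z \<partial>(distr M S U \<Otimes>\<^sub>M distr M T V))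
      = (\<integral>u. (\<integral>v. \<phi> (u, v) \<partial>distr M T V) \<partial>distr M S U)"
    by (rule UV.integral_fst'[symmetric])
  moreover have "(\<integral>\<omega>. \<phi> (U \<omega>, V \<omega>) \<partial>M) = (\<integral>z. \<phi> z \<partial>distr M (S \<Otimes>\<^sub>M T) (\<lambda>\<omega>. (U \<omega>, V \<omega>)))"
    using U_meas V_meas \<phi>_meas by (subst integral_distr) auto
  ultimately show ?thesis
    by (simp add: joint)
qed

locale iid_sequence = prob_space M for M :: "'a measure" +
  fixes X :: "nat \<Rightarrow> 'a \<Rightarrow> real" and F :: "real measure"
  assumes indep: "indep_vars (\<lambda>_. borel) X {1..}"
    and law: "\<And>i. 1 \<le> i \<Longrightarrow> distr M borel (X i) = F"
    and X_meas [measurable]: "\<And>i. X i \<in> borel_measurable M"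
begin

lemma prob_space_F: "prob_space F"
  using law[of 1] prob_space_distr[of "X 1" borel] by simp

lemma sets_F [measurable_cong]: "sets F = sets borel"
  using law[of 1] by auto

sublocale FF: pair_prob_space F F
  using prob_space_F by (simp add: pair_prob_space_def pair_sigma_finite_def prob_space_imp_sigma_finite)

lemma distr_pair_eq_pair_measure:
  assumes "1 \<le> k" "1 \<le> l" "k \<noteq> l"
  shows "distr M (borel \<Otimes>\<^sub>M borel) (\<lambda>\<omega>. (X k \<omega>, X l \<omega>)) = F \<Otimes>\<^sub>M F"
proof -
  have "indep_var borel ((\<lambda>f. f k) \<circ> (\<lambda>\<omega>. restrict (\<lambda>i. X i \<omega>) {k}))
                  borel ((\<lambda>f. f l) \<circ> (\<lambda>\<omega>. restrict (\<lambda>i. X i \<omega>) {l}))"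
    using assms by (intro indep_var_compose[OF indep_var_restrict[OF indep]]) auto
  then have "indep_var borel (X k) borel (X l)"
    by (simp add: o_def)
  then show ?thesis
    using law assms by (simp add: indep_var_distribution_eq)
qed

end

locale unit_kernel =
  fixes g :: "real \<Rightarrow> real \<Rightarrow> real \<Rightarrow> real"
  assumes g_meas: "(\<lambda>(x, y, z). g x y z) \<in> borel_measurable (borel \<Otimes>\<^sub>M (borel \<Otimes>\<^sub>M borel))"
    and g_nonneg: "\<And>x y z. 0 \<le> g x y z" and g_le_1: "\<And>x y z. g x y z \<le> 1"
begin

lemma measurable_g [measurable (raw)]:
  assumes [measurable]: "f1 \<in> borel_measurable N" "f2 \<in> borel_measurable N" "f3 \<in> borel_measurable N"
  shows "(\<lambda>\<omega>. g (f1 \<omega>) (f2 \<omega>) (f3 \<omega>)) \<in> borel_measurable N"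
  using measurable_comp[OF _ g_meas, of "\<lambda>\<omega>. (f1 \<omega>, f2 \<omega>, f3 \<omega>)"] by (simp add: o_def)

end

definition kernel_mean :: "real measure \<Rightarrow> (real \<Rightarrow> real \<Rightarrow> real \<Rightarrow> real) \<Rightarrow> real \<Rightarrow> real" where
  "kernel_mean F g x = (\<integral>q. g x (fst q) (snd q) \<partial>(F \<Otimes>\<^sub>M F))"

locale ustat = iid_sequence + unit_kernel +
  fixes \<psi> :: "real \<Rightarrow> real"
  assumes \<psi>_meas [measurable]: "\<psi> \<in> borel_measurable borel"
begin

lemma kernel_mean_meas [measurable]: "kernel_mean F g \<in> borel_measurable borel"
  unfolding kernel_mean_def by measurable

lemma kernel_mean_bounds: "0 \<le> kernel_mean F g x" "kernel_mean F g x \<le> 1"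
proof -
  have "integrable (F \<Otimes>\<^sub>M F) (\<lambda>q. g x (fst q) (snd q))"
    using g_nonneg g_le_1 by (intro FF.P.integrable_const_bound[where B=1]) auto
  then show "0 \<le> kernel_mean F g x" "kernel_mean F g x \<le> 1"
    unfolding kernel_mean_def using g_nonneg g_le_1 by (auto intro: FF.P.integral_le_const)
qed

lemma abs_kernel_minus_kernel_mean_le: "\<bar>g x y z - kernel_mean F g x\<bar> \<le> 1"
  using g_nonneg[of x y z] g_le_1[of x y z] kernel_mean_bounds[of x] by linarith

lemma expectation_kernel_pair:
  assumes "1 \<le> k" "1 \<le> l" "k \<noteq> l"
  shows "(\<integral>\<omega>. g x (X k \<omega>) (X l \<omega>) \<partial>M) = kernel_mean F g x"
proof -
  have "(\<integral>\<omega>. g x (X k \<omega>) (X l \<omega>) \<partial>M)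
      = (\<integral>q. g x (fst q) (snd q) \<partial>distr M (borel \<Otimes>\<^sub>M borel) (\<lambda>\<omega>. (X k \<omega>, X l \<omega>)))"
    by (subst integral_distr) auto
  then show ?thesis
    using assms by (simp add: distr_pair_eq_pair_measure kernel_mean_def)
qed

definition centered :: "nat \<times> nat \<Rightarrow> 'a \<Rightarrow> real" where
  "centered p \<omega> = g (\<psi> (X 1 \<omega>)) (X (fst p) \<omega>) (X (snd p) \<omega>) - kernel_mean F g (\<psi> (X 1 \<omega>))"

lemma centered_meas [measurable]: "centered p \<in> borel_measurable M"
  unfolding centered_def by measurable

lemma abs_centered_le: "\<bar>centered p \<omega>\<bar> \<le> 1"
  unfolding centered_def by (rule abs_kernel_minus_kernel_mean_le)

lemma integral_centered_mult_eq_0: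
  assumes "2 \<le> i" "2 \<le> j" "2 \<le> k" "2 \<le> l" "k \<noteq> l" "{k, l} \<inter> {i, j} = {}"
  shows "(\<integral>\<omega>. centered (i, j) \<omega> * centered (k, l) \<omega> \<partial>M) = 0"
proof -
  define U where "U \<omega> = restrict (\<lambda>t. X t \<omega>) {1, i, j}" for \<omega>
  define V where "V \<omega> = restrict (\<lambda>t. X t \<omega>) {k, l}" for \<omega>
  define c where "c x y z = g x y z - kernel_mean F g x" for x y z
  define \<phi> where "\<phi> uv = c (\<psi> (fst uv 1)) (fst uv i) (fst uv j) * c (\<psi> (fst uv 1)) (snd uv k) (snd uv l)"
    for uv :: "(nat \<Rightarrow> real) \<times> (nat \<Rightarrow> real)"
  \<comment> \<open>The blocks {1, i, j} and {k, l} are independent, so the second factor can be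
    integrated out first; for every value of X 1 it has mean zero.\<close>
  have indep_UV: "indep_var (PiM {1, i, j} (\<lambda>_. borel)) U (PiM {k, l} (\<lambda>_. borel)) V"
    unfolding U_def V_def using assms by (intro indep_var_restrict[OF indep]) auto
  have V_meas: "V \<in> measurable M (PiM {k, l} (\<lambda>_. borel))"
    unfolding V_def by measurable
  have inner: "(\<integral>v. \<phi> (u, v) \<partial>distr M (PiM {k, l} (\<lambda>_. borel)) V) = 0" for u
  proof -
    let ?x = "\<psi> (u 1)"
    have "(\<integral>v. \<phi> (u, v) \<partial>distr M (PiM {k, l} (\<lambda>_. borel)) V) = (\<integral>\<omega>. \<phi> (u, V \<omega>) \<partial>M)"
      using V_meas unfolding \<phi>_def c_def by (subst integral_distr) auto
    also have "\<dots> = c ?x (u i) (u j) * (\<integral>\<omega>. g ?x (X k \<omega>) (X l \<omega>) - kernel_mean F g ?x \<partial>M)"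
      by (simp add: \<phi>_def c_def V_def)
    also have "(\<integral>\<omega>. g ?x (X k \<omega>) (X l \<omega>) - kernel_mean F g ?x \<partial>M) = 0"
      using assms g_nonneg g_le_1
      by (subst Bochner_Integration.integral_diff)
         (auto simp: expectation_kernel_pair prob_space intro!: integrable_const_bound[where B=1])
    finally show ?thesis
      by simp
  qed
  have "(\<integral>\<omega>. centered (i, j) \<omega> * centered (k, l) \<omega> \<partial>M) = (\<integral>\<omega>. \<phi> (U \<omega>, V \<omega>) \<partial>M)"
    by (simp add: centered_def \<phi>_def c_def U_def V_def)
  also have "\<dots> = (\<integral>u. (\<integral>v. \<phi> (u, v) \<partial>distr M (PiM {k, l} (\<lambda>_. borel)) V)
      \<partial>distr M (PiM {1, i, j} (\<lambda>_. borel)) U)"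
    using abs_kernel_minus_kernel_mean_le
    by (intro integral_indep_var[OF indep_UV, where c=1])
       (auto simp: \<phi>_def c_def abs_mult intro: mult_le_one)
  also have "\<dots> = 0"
    by (simp add: inner)
  finally show ?thesis .
qed

lemma second_moment_centered_sum:
  "(\<integral>\<omega>. (\<Sum>p\<in>index_pairs n. centered p \<omega>)\<^sup>2 \<partial>M) \<le> real (card (index_pairs n)) * (4 * (real n + 1))"
proof -
  have "(\<integral>\<omega>. (\<Sum>p\<in>index_pairs n. centered p \<omega>)\<^sup>2 \<partial>M) \<le> real (card (index_pairs n)) * real (4 * (n + 1))"
  proof (rule second_moment_sum_le[where R="\<lambda>p. {q. fst q \<in> {fst p, snd p} \<or> snd q \<in> {fst p, snd p}}"])
    fix p q assume "p \<in> index_pairs n" "q \<in> index_pairs n"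
      and "q \<notin> {q. fst q \<in> {fst p, snd p} \<or> snd q \<in> {fst p, snd p}}"
    then show "(\<integral>\<omega>. centered p \<omega> * centered q \<omega> \<partial>M) = 0"
      using integral_centered_mult_eq_0[of "fst p" "snd p" "fst q" "snd q"]
      by (auto simp: mem_index_pairs)
  next
    fix p
    show "card {q \<in> index_pairs n. q \<in> {q. fst q \<in> {fst p, snd p} \<or> snd q \<in> {fst p, snd p}}}
        \<le> 4 * (n + 1)"
      using card_index_pairs_meeting[of n "fst p" "snd p"] by simp
  qed (auto simp: abs_centered_le)
  then show ?thesis
    by (simp add: algebra_simps)
qed

lemma abs_centered_sum_le: "\<bar>\<Sum>p\<in>index_pairs n. centered p \<omega>\<bar> \<le> real (card (index_pairs n))"
proof -
  have "\<bar>\<Sum>p\<in>index_pairs n. centered p \<omega>\<bar> \<le> (\<Sum>p\<in>index_pairs n. \<bar>centered p \<omega>\<bar>)"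
    by (rule sum_abs)
  also have "\<dots> \<le> (\<Sum>p\<in>index_pairs n. 1)"
    by (intro sum_mono abs_centered_le)
  finally show ?thesis
    by simp
qed

lemma AE_centered_mean_along_squares:
  "AE \<omega> in M. (\<lambda>k. (\<Sum>p\<in>index_pairs (k\<^sup>2). centered p \<omega>) / real (card (index_pairs (k\<^sup>2)))) \<longlonglongrightarrow> 0"
proof (rule AE_LIMSEQ_zero_of_summable_second_moments)
  let ?D = "\<lambda>n \<omega>. \<Sum>p\<in>index_pairs n. centered p \<omega>"
  let ?N = "\<lambda>n. real (card (index_pairs n))"
  show int: "integrable M (\<lambda>\<omega>. (?D (k\<^sup>2) \<omega> / ?N (k\<^sup>2))\<^sup>2)" for k
  proof (rule integrable_const_bound[where B=1])
    have "\<bar>?D (k\<^sup>2) \<omega> / ?N (k\<^sup>2)\<bar> \<le> 1" for \<omega>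
      using abs_centered_sum_le[of \<omega> "k\<^sup>2"] by (auto simp: abs_divide divide_le_eq_1)
    then show "AE \<omega> in M. norm ((?D (k\<^sup>2) \<omega> / ?N (k\<^sup>2))\<^sup>2) \<le> 1"
      by (simp add: abs_square_le_1)
  qed simp
  have bound: "(\<integral>\<omega>. (?D n \<omega> / ?N n)\<^sup>2 \<partial>M) \<le> 4 * (real n + 1) / ?N n" for n
  proof (cases "?N n = 0")
    case False
    then have "(\<integral>\<omega>. (?D n \<omega> / ?N n)\<^sup>2 \<partial>M) = (\<integral>\<omega>. (?D n \<omega>)\<^sup>2 \<partial>M) / (?N n)\<^sup>2"
      by (simp add: power_divide)
    also have "\<dots> \<le> ?N n * (4 * (real n + 1)) / (?N n)\<^sup>2"
      by (intro divide_right_mono second_moment_centered_sum) simp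
    finally show ?thesis
      using False by (simp add: power2_eq_square)
  qed simp
  show "summable (\<lambda>k. \<integral>\<omega>. (?D (k\<^sup>2) \<omega> / ?N (k\<^sup>2))\<^sup>2 \<partial>M)"
  proof (rule summable_comparison_test'[OF summable_linear_over_card_index_pairs_squares])
    fix k
    show "norm (\<integral>\<omega>. (?D (k\<^sup>2) \<omega> / ?N (k\<^sup>2))\<^sup>2 \<partial>M)
        \<le> 4 * (real (k\<^sup>2) + 1) / ?N (k\<^sup>2)"
      using bound[of "k\<^sup>2"] by (simp add: abs_of_nonneg)
  qed
qed measurable

definition ustat_sum :: "nat \<Rightarrow> 'a \<Rightarrow> real" where
  "ustat_sum n \<omega> = (\<Sum>p\<in>index_pairs n. g (\<psi> (X 1 \<omega>)) (X (fst p) \<omega>) (X (snd p) \<omega>))"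

lemma mono_ustat_sum: "mono (\<lambda>n. ustat_sum n \<omega>)"
  unfolding ustat_sum_def
  by (intro monoI sum_mono2 monoD[OF mono_index_pairs]) (auto simp: g_nonneg)

lemma ustat_sum_nonneg: "0 \<le> ustat_sum n \<omega>"
  unfolding ustat_sum_def by (intro sum_nonneg) (simp add: g_nonneg)

lemma ustat_strong_law:
  "AE \<omega> in M. (\<lambda>n. ustat_sum n \<omega> / real (card (index_pairs n))) \<longlonglongrightarrow> kernel_mean F g (\<psi> (X 1 \<omega>))"
  using AE_centered_mean_along_squares
proof eventually_elim
  case (elim \<omega>)
  let ?\<theta> = "kernel_mean F g (\<psi> (X 1 \<omega>))"
  let ?N = "\<lambda>n. real (card (index_pairs n))"
  have "eventually (\<lambda>k. (\<Sum>p\<in>index_pairs (k\<^sup>2). centered p \<omega>) / ?N (k\<^sup>2) + ?\<theta>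
      = ustat_sum (k\<^sup>2) \<omega> / ?N (k\<^sup>2)) sequentially"
    using eventually_ge_at_top[of 2]
  proof eventually_elim
    case (elim k)
    then have "3 \<le> k\<^sup>2"
      using mult_le_mono[of 2 k 2 k] by (simp add: power2_eq_square)
    then have "?N (k\<^sup>2) \<noteq> 0"
      using card_index_pairs_pos by fastforce
    have "ustat_sum (k\<^sup>2) \<omega> = (\<Sum>p\<in>index_pairs (k\<^sup>2). centered p \<omega>) + ?N (k\<^sup>2) * ?\<theta>"
      by (simp add: centered_def ustat_sum_def sum_subtractf)
    then show ?case
      using \<open>?N (k\<^sup>2) \<noteq> 0\<close> by (simp add: add_divide_distrib)
  qed
  moreover have "(\<lambda>k. (\<Sum>p\<in>index_pairs (k\<^sup>2). centered p \<omega>) / ?N (k\<^sup>2) + ?\<theta>) \<longlonglongrightarrow> 0 + ?\<theta>"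
    using elim by (intro tendsto_add tendsto_const)
  ultimately have squares: "(\<lambda>k. ustat_sum (k\<^sup>2) \<omega> / ?N (k\<^sup>2)) \<longlonglongrightarrow> ?\<theta>"
    by (simp add: tendsto_cong)
  have "mono ?N"
    by (intro monoI of_nat_mono card_mono finite_index_pairs monoD[OF mono_index_pairs])
  then show ?case
    using LIMSEQ_ratio_of_mono_along_squares[OF mono_ustat_sum ustat_sum_nonneg _
        eventually_card_index_pairs_pos card_index_pairs_squares_ratio squares] by blast
qed

end

lemma sum_eq_0_or_ge_1:
  fixes f :: "'i \<Rightarrow> real"
  assumes "\<And>i. i \<in> A \<Longrightarrow> f i = 0 \<or> 1 \<le> f i"
  shows "sum f A = 0 \<or> 1 \<le> sum f A"
proof (cases "finite A \<and> (\<exists>i\<in>A. f i \<noteq> 0)")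
  case True
  then obtain i where i: "i \<in> A" "1 \<le> f i"
    using assms by auto
  have "f i \<le> sum f A"
    using True i assms by (intro member_le_sum) force+
  then show ?thesis
    using i by simp
qed auto

lemma Vn_eq_0_or_ge_1: "Vn fc B X n x \<omega> = 0 \<or> 1 \<le> Vn fc B X n x \<omega>"
  unfolding Vn_def by (intro sum_eq_0_or_ge_1) (auto simp: hV_def indicator_def)

lemma LIMSEQ_clustering_ratio:
  fixes T V N :: "nat \<Rightarrow> real"
  assumes T: "(\<lambda>n. T n / N n) \<longlonglongrightarrow> et" and V: "(\<lambda>n. V n / N n) \<longlonglongrightarrow> ed\<^sup>2"
    and ed_nonneg: "0 \<le> ed" and N_pos: "eventually (\<lambda>n. 0 < N n) sequentially"
    and V_values: "\<And>n. V n = 0 \<or> 1 \<le> V n"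
    and V_zero: "ed = 0 \<Longrightarrow> \<forall>n. V n = 0"
  shows "(\<lambda>n. T n / V n * indicator {1..} (V n) + w * indicator {0} (V n))
          \<longlonglongrightarrow> et / ed\<^sup>2 * indicator {0<..} ed + w * indicator {0} ed"
proof (cases "ed = 0")
  case False
  then have "0 < ed\<^sup>2"
    by simp
  then have "eventually (\<lambda>n. 0 < V n / N n) sequentially"
    by (rule order_tendstoD(1)[OF V])
  with N_pos have "eventually (\<lambda>n. (T n / N n) / (V n / N n)
      = T n / V n * indicator {1..} (V n) + w * indicator {0} (V n)) sequentially"
  proof eventually_elim
    case (elim n)
    then have "1 \<le> V n"
      using V_values[of n] by (auto simp: zero_less_divide_iff)
    then show ?case
      using elim by (simp add: indicator_def)
  qed
  moreover have "(\<lambda>n. (T n / N n) / (V n / N n)) \<longlonglongrightarrow> et / ed\<^sup>2"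
    using \<open>0 < ed\<^sup>2\<close> by (intro tendsto_divide T V) auto
  ultimately show ?thesis
    using False ed_nonneg by (simp add: indicator_def tendsto_cong)
qed (use V_zero in simp)

locale edge_model = iid_sequence +
  fixes fc :: "real \<Rightarrow> real \<Rightarrow> real" and B :: "real set"
  assumes fc_meas [measurable]: "(\<lambda>(x, y). fc x y) \<in> borel_measurable (borel \<Otimes>\<^sub>M borel)"
    and B_borel [measurable]: "B \<in> sets borel"
begin

lemma unit_kernel_hT: "unit_kernel (hT fc B)"
  by unfold_locales (auto simp: hT_def indicator_def split_beta')

lemma unit_kernel_hV: "unit_kernel (hV fc B)"
  by unfold_locales (auto simp: hV_def indicator_def split_beta')

lemma ED_meas [measurable]: "ED fc B F \<in> borel_measurable borel"
  unfolding ED_def hD_def by (rule FF.M1.borel_measurable_lebesgue_integral) measurable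

lemma ED_nonneg: "0 \<le> ED fc B F x"
  unfolding ED_def hD_def by simp

lemma kernel_mean_hT: "kernel_mean F (hT fc B) x = ET fc B F x"
proof -
  have "integrable (F \<Otimes>\<^sub>M F) (\<lambda>(y, z). hT fc B x y z)"
    by (intro FF.P.integrable_const_bound[where B=1]) (auto simp: hT_def indicator_def split_beta')
  from FF.integral_snd[OF this] show ?thesis
    by (simp add: kernel_mean_def ET_def split_beta')
qed

lemma kernel_mean_hV: "kernel_mean F (hV fc B) x = (ED fc B F x)\<^sup>2"
proof -
  have "integrable (F \<Otimes>\<^sub>M F) (\<lambda>(y, z). hV fc B x y z)"
    by (intro FF.P.integrable_const_bound[where B=1]) (auto simp: hV_def indicator_def split_beta')
  from FF.integral_snd[OF this]
  have "kernel_mean F (hV fc B) x = (\<integral>z. (\<integral>y. indicator B (fc x y) \<partial>F) * indicator B (fc x z) \<partial>F)"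
    by (simp add: kernel_mean_def hV_def split_beta')
  then show ?thesis
    by (simp add: ED_def hD_def power2_eq_square)
qed

lemma AE_isolated_if_ED_eq_0:
  assumes [measurable]: "\<psi> \<in> borel_measurable borel"
  shows "AE \<omega> in M. ED fc B F (\<psi> (X 1 \<omega>)) = 0 \<longrightarrow>
    (\<forall>j\<ge>2. indicator B (fc (\<psi> (X 1 \<omega>)) (X j \<omega>)) = (0::real))"
proof -
  define \<phi> where "\<phi> q = (if ED fc B F (\<psi> (fst q)) = 0 then indicator B (fc (\<psi> (fst q)) (snd q)) else 0 :: real)"
    for q
  have \<phi>_meas [measurable]: "\<phi> \<in> borel_measurable (borel \<Otimes>\<^sub>M borel)"
    unfolding \<phi>_def by measurable
  have "AE \<omega> in M. \<phi> (X 1 \<omega>, X j \<omega>) = 0" if "2 \<le> j" for j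
  proof -
    have "(\<integral>\<omega>. \<phi> (X 1 \<omega>, X j \<omega>) \<partial>M) = (\<integral>q. \<phi> q \<partial>distr M (borel \<Otimes>\<^sub>M borel) (\<lambda>\<omega>. (X 1 \<omega>, X j \<omega>)))"
      by (subst integral_distr) auto
    also have "\<dots> = (\<integral>q. \<phi> q \<partial>(F \<Otimes>\<^sub>M F))"
      using that by (simp add: distr_pair_eq_pair_measure)
    also have "\<dots> = (\<integral>x. (\<integral>y. \<phi> (x, y) \<partial>F) \<partial>F)"
      by (intro FF.integral_fst'[symmetric] FF.P.integrable_const_bound[where B=1])
         (auto simp: \<phi>_def indicator_def)
    also have "\<dots> = 0"
    proof -
      have "(\<integral>y. \<phi> (x, y) \<partial>F) = 0" for x
        by (cases "ED fc B F (\<psi> x) = 0") (simp_all add: \<phi>_def ED_def hD_def)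
      then show ?thesis
        by simp
    qed
    finally show ?thesis
      by (subst integral_nonneg_eq_0_iff_AE[symmetric])
         (auto simp: \<phi>_def indicator_def intro!: integrable_const_bound[where B=1])
  qed
  then have "AE \<omega> in M. \<forall>j\<ge>2. \<phi> (X 1 \<omega>, X j \<omega>) = 0"
    by (subst AE_all_countable) auto
  then show ?thesis
    by eventually_elim (auto simp: \<phi>_def)
qed

lemma clustering_coefficient_AE_tendsto:
  assumes \<psi>_meas: "\<psi> \<in> borel_measurable borel"
  shows "AE \<omega> in M. (\<lambda>n. Cn fc B w X n (\<psi> (X 1 \<omega>)) \<omega>) \<longlonglongrightarrow> Clim fc B w F (\<psi> (X 1 \<omega>))"
proof -
  interpret T: ustat M X F "hT fc B" \<psi>
    using unit_kernel_hT \<psi>_meas by (simp add: ustat_def ustat_axioms_def iid_sequence_axioms)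
  interpret V: ustat M X F "hV fc B" \<psi>
    using unit_kernel_hV \<psi>_meas by (simp add: ustat_def ustat_axioms_def iid_sequence_axioms)
  show ?thesis
    using T.ustat_strong_law V.ustat_strong_law AE_isolated_if_ED_eq_0[OF \<psi>_meas]
  proof eventually_elim
    case (elim \<omega>)
    let ?x = "\<psi> (X 1 \<omega>)"
    have Tn_eq: "Tn fc B X n ?x \<omega> = T.ustat_sum n \<omega>"
      and Vn_eq: "Vn fc B X n ?x \<omega> = V.ustat_sum n \<omega>" for n
      unfolding Tn_def Vn_def T.ustat_sum_def V.ustat_sum_def by (simp_all add: sum_index_pairs)
    have "ED fc B F ?x = 0 \<Longrightarrow> \<forall>n. Vn fc B X n ?x \<omega> = 0"
      using elim(3) by (auto simp: Vn_def hV_def intro!: sum.neutral)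
    then show ?case
      unfolding Cn_def Clim_def Tn_eq Vn_eq
      by (intro LIMSEQ_clustering_ratio[OF _ _ ED_nonneg eventually_card_index_pairs_pos])
         (use elim(1,2) Vn_eq_0_or_ge_1[of fc B X _ ?x \<omega>, unfolded Vn_eq]
            kernel_mean_hT kernel_mean_hV in auto)
  qed
qed

end

theorem theorem2:
  fixes M :: "'a measure" and X :: "nat \<Rightarrow> 'a \<Rightarrow> real" and F :: "real measure"
    and fc :: "real \<Rightarrow> real \<Rightarrow> real" and B :: "real set" and w :: real
  assumes "prob_space M"
    and "prob_space.indep_vars M (\<lambda>_. borel) X {1..}"
    and "\<And>i. i \<ge> 1 \<Longrightarrow> distr M borel (X i) = F"
    and "(\<lambda>(x, y). fc x y) \<in> borel_measurable (borel \<Otimes>\<^sub>M borel)"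
    and "\<And>x y. fc x y = fc y x"
    and "B \<in> sets borel"
  shows "(\<forall>x. AE \<omega> in M. (\<lambda>n. Cn fc B w X n x \<omega>) \<longlonglongrightarrow> Clim fc B w F x)
       \<and> (AE \<omega> in M. (\<lambda>n. Cn fc B w X n (X 1 \<omega>) \<omega>) \<longlonglongrightarrow> Clim fc B w F (X 1 \<omega>))"
proof -
  interpret prob_space M by fact
  \<comment> \<open>X is only known to be measurable at indices \<open>\<ge> 1\<close>; X' copies X 1 to index 0.\<close>
  define X' where "X' i = X (max 1 i)" for i
  have "edge_model M X' F fc B"
  proof unfold_locales
    show "indep_vars (\<lambda>_. borel) X' {1..}"
      using assms(2) by (rule indep_vars_cong[THEN iffD1, rotated 3]) (auto simp: X'_def)
    show "X' i \<in> borel_measurable M" for i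
      using assms(2) by (auto simp: X'_def indep_vars_def)
  qed (use assms(3,4,6) in \<open>auto simp: X'_def\<close>)
  moreover have "Cn fc B w X' n = Cn fc B w X n" for n
    by (intro ext) (auto simp: Cn_def Tn_def Vn_def X'_def intro!: sum.cong)
  ultimately show ?thesis
    using edge_model.clustering_coefficient_AE_tendsto[of M X' F fc B "\<lambda>_. x" w for x]
      edge_model.clustering_coefficient_AE_tendsto[of M X' F fc B "\<lambda>y. y" w]
    by (simp add: X'_def)
qed

end
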